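(* Let $m,a,b,n$ be positive integers with $n\ge 3$ and $(3m+1)/2\le a<b\le (5m-1)/3$. Let $A\subset\mathbb N_+$ with $|A|=n-1$, $\min A=a$, $\max A=b$, and suppose that $A$ induces a $B_3$ set in $\mathbb Z/m\mathbb Z$ in the following sense: the sums $x_1+\dots+x_h$, taken over all $h\in\{1,2,3\}$ and all multisets $\{x_1,\dots,x_h\}$ of elements of $A$, are pairwise distinct modulo $m$ (distinct multisets, including those of different sizes, give distinct residues). Let $S=\langle \{m\}\cup A\rangle_{4m}$. Then $S$ has conductor $4m$, $|P\cap L|=n$, and $$W_0(S)=-\binom{n}{3}.$$
   Context: $\mathbb N=\{0,1,2,\dots\}$, $\mathbb N_+=\mathbb N\setminus\{0\}$; $[x,y]=\{z\in\mathbb Z: x\le z\le y\}$. For a finite set $B$ of positive integers and a positive integer $t$, $\langle B\rangle_t=\big(\sum_{x\in B}\mathbb N x\big)\cup\{z\in\mathbb Z: z\ge t\}$; this is a numerical semigroup. A numerical semigroup is a submonoid $S\subseteq\mathbb N$ with $\mathbb N\setminus S$ finite; multiplicity $m=\min(S\setminus\{0\})$; conductor $c=1+\max(\mathbb Z\setminus S)$; $q=\lceil c/m\rceil$, $\rho=qm-c$. Let $S^*=S\setminus\{0\}$, $D=S^*+S^*$, $P=S^*\setminus D$ (primitive elements), $L=S\cap[0,c-1]$, $D_q=D\cap[c,c+m-1]$, and $W_0(S)=|P\cap L|\,|L|-q|D_q|+\rho$. *)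

theory Defs
  imports Complex_Main "HOL-Library.Multiset"
begin

definition gen_sg :: "nat set \<Rightarrow> nat \<Rightarrow> nat set" where
  "gen_sg B t = {\<Sum>x\<in>B. f x * x | f. True} \<union> {t..}"

definition multiplicity_ns :: "nat set \<Rightarrow> nat" where
  "multiplicity_ns S = (LEAST x. x \<in> S \<and> x \<noteq> 0)"

text \<open>conductor c = 1 + max (Z \ S); for S \<subseteq> N this is the least c with [c,\<infinity>) \<subseteq> S.\<close>
definition conductor_ns :: "nat set \<Rightarrow> nat" where
  "conductor_ns S = (LEAST c. \<forall>z\<ge>c. z \<in> S)"

definition q_ns :: "nat set \<Rightarrow> nat" where
  "q_ns S = nat \<lceil>real (conductor_ns S) / real (multiplicity_ns S)\<rceil>"

definition rho_ns :: "nat set \<Rightarrow> int" where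
  "rho_ns S = int (q_ns S * multiplicity_ns S) - int (conductor_ns S)"

definition Sstar :: "nat set \<Rightarrow> nat set" where
  "Sstar S = S - {0}"

definition D_ns :: "nat set \<Rightarrow> nat set" where
  "D_ns S = {x + y | x y. x \<in> Sstar S \<and> y \<in> Sstar S}"

definition P_ns :: "nat set \<Rightarrow> nat set" where
  "P_ns S = Sstar S - D_ns S"

definition L_ns :: "nat set \<Rightarrow> nat set" where
  "L_ns S = S \<inter> {0..<conductor_ns S}"

definition Dq_ns :: "nat set \<Rightarrow> nat set" where
  "Dq_ns S = D_ns S \<inter> {conductor_ns S .. conductor_ns S + multiplicity_ns S - 1}"

definition W0 :: "nat set \<Rightarrow> int" where
  "W0 S = int (card (P_ns S \<inter> L_ns S)) * int (card (L_ns S))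
          - int (q_ns S) * int (card (Dq_ns S)) + rho_ns S"

end

theory Submission
  imports Defs
begin

(*
  Below 5m, every element of S = <{m} \<union> A>_4m has the form jm + x_1 + ... + x_k with all x_i \<in> A;
  call the set of these numbers the level (j, k). Since 3m/2 < x_i < 5m/3, level (j, k) lies in
  ((2j + 3k)m/2, (3j + 5k)m/3], so its position depends only on the weight 2j + 3k: it lies below 4m
  iff the weight is < 8 and in [4m, 5m) iff the weight is 8 or 9. For k \<le> 3 the B_3 property makes
  the residue mod m of jm + x_1 + ... + x_k determine the multiset {x_1, ..., x_k}, and the bounds show
  that this residue is never 0; hence these levels are pairwise disjoint and level (j, k) has as many
  elements as there are k-multisets on A. So L and D_q are disjoint unions of explicitly listed levels,
  P \<inter> L = {m} \<union> A, and W_0 reduces to a binomial identity.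
*)

lemma sum_mset_eq_sum_count:
  fixes M :: "nat multiset"
  assumes "finite B" "set_mset M \<subseteq> B"
  shows "sum_mset M = (\<Sum>x\<in>B. count M x * x)"
  using assms(2)
proof (induction M)
  case empty
  then show ?case by simp
next
  case (add y M)
  then have "y \<in> B" and IH: "sum_mset M = (\<Sum>x\<in>B. count M x * x)" by auto
  have "(\<Sum>x\<in>B. count (add_mset y M) x * x) = (\<Sum>x\<in>B. count M x * x + (if x = y then y else 0))"
    by (intro sum.cong) auto
  also have "\<dots> = sum_mset M + y"
    using assms(1) \<open>y \<in> B\<close> by (simp add: sum.distrib IH)
  finally show ?case by simp
qed

lemma gen_sg_eq_sum_mset_image:
  assumes "finite B"
  shows "gen_sg B t = sum_mset ` {M. set_mset M \<subseteq> B} \<union> {t..}"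
proof -
  have sum_as_mset: "\<exists>M. set_mset M \<subseteq> B \<and> sum_mset M = (\<Sum>x\<in>B. f x * x)" for f
    using assms
  proof (induction B rule: finite_induct)
    case empty
    then show ?case by auto
  next
    case (insert b B)
    then obtain M where "set_mset M \<subseteq> B" "sum_mset M = (\<Sum>x\<in>B. f x * x)" by blast
    with insert.hyps show ?case
      by (intro exI[of _ "replicate_mset (f b) b + M"]) auto
  qed
  have "{\<Sum>x\<in>B. f x * x | f. True} = sum_mset ` {M. set_mset M \<subseteq> B}"
  proof (intro equalityI subsetI)
    fix z assume "z \<in> {\<Sum>x\<in>B. f x * x | f. True}"
    then obtain f where "z = (\<Sum>x\<in>B. f x * x)"
      by blast
    moreover obtain M where "set_mset M \<subseteq> B" "sum_mset M = (\<Sum>x\<in>B. f x * x)"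
      using sum_as_mset by blast
    ultimately show "z \<in> sum_mset ` {M. set_mset M \<subseteq> B}"
      by (intro image_eqI[where x = M]) auto
  next
    fix z assume "z \<in> sum_mset ` {M. set_mset M \<subseteq> B}"
    then show "z \<in> {\<Sum>x\<in>B. f x * x | f. True}"
      using sum_mset_eq_sum_count[OF assms] by blast
  qed
  then show ?thesis
    unfolding gen_sg_def by simp
qed

lemma sum_mset_image_insert:
  fixes c :: nat
  shows "sum_mset ` {M. set_mset M \<subseteq> insert c B} = {j * c + sum_mset X | j X. set_mset X \<subseteq> B}"
proof (intro equalityI subsetI)
  fix z assume "z \<in> sum_mset ` {M. set_mset M \<subseteq> insert c B}"
  then obtain M where M: "set_mset M \<subseteq> insert c B" "z = sum_mset M" by blast
  define X where "X = filter_mset (\<lambda>x. x \<noteq> c) M"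
  have "M = filter_mset (\<lambda>x. x = c) M + X"
    unfolding X_def by (rule multiset_partition)
  also have "filter_mset (\<lambda>x. x = c) M = replicate_mset (count M c) c"
    by (rule filter_eq_replicate_mset)
  finally have "sum_mset M = sum_mset (replicate_mset (count M c) c + X)"
    by (rule arg_cong)
  then have "z = count M c * c + sum_mset X"
    using M(2) by simp
  moreover have "set_mset X \<subseteq> B"
    using M(1) unfolding X_def by auto
  ultimately show "z \<in> {j * c + sum_mset X | j X. set_mset X \<subseteq> B}" by blast
next
  fix z assume "z \<in> {j * c + sum_mset X | j X. set_mset X \<subseteq> B}"
  then obtain j X where "set_mset X \<subseteq> B" "z = j * c + sum_mset X" by blast
  then show "z \<in> sum_mset ` {M. set_mset M \<subseteq> insert c B}"
    by (intro image_eqI[of _ _ "replicate_mset j c + X"]) auto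
qed

lemma sum_mset_lower_bound:
  fixes X :: "nat multiset"
  assumes "\<And>x. x \<in># X \<Longrightarrow> l \<le> c * x"
  shows "size X * l \<le> c * sum_mset X"
  using assms by (induction X) (auto simp: algebra_simps intro: add_mono)

lemma sum_mset_upper_bound:
  fixes X :: "nat multiset"
  assumes "\<And>x. x \<in># X \<Longrightarrow> c * x + d \<le> u"
  shows "c * sum_mset X + size X * d \<le> size X * u"
  using assms
proof (induction X)
  case (add x X)
  then have "c * x + d + (c * sum_mset X + size X * d) \<le> u + size X * u"
    by (intro add_mono) auto
  then show ?case
    by (simp add: algebra_simps)
qed simp

lemma binomial_count_identity:
  fixes k :: nat
  shows "Suc k * (4 + 3 * k + (Suc k choose 2)) + (Suc k choose 3)
       = 4 * (1 + k + (Suc k choose 2) + (Suc (Suc k) choose 3))"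
proof -
  define c d where "c = k choose 2" and "d = Suc k choose 3"
  have c: "2 * c + k = k * k"
    using times_binomial_minus1_eq[of 2 k] by (cases k) (simp_all add: c_def)
  have d: "3 * d = Suc k * c"
    using times_binomial_minus1_eq[of 3 "Suc k"] by (simp add: c_def d_def)
  have "Suc k choose 2 = k + c"
    by (simp add: c_def numeral_2_eq_2)
  moreover have "Suc (Suc k) choose 3 = k + c + d"
    by (simp add: c_def d_def numeral_3_eq_3 numeral_2_eq_2)
  moreover have "Suc k * (4 + 3 * k + (k + c)) + d = 4 * (1 + k + (k + c) + (k + c + d))"
    using c d by (simp add: algebra_simps)
  ultimately show ?thesis
    by (simp add: d_def)
qed

locale B3_generators =
  fixes m :: nat and A :: "nat set"
  assumes finite_A: "finite A"
    and A_nonempty: "A \<noteq> {}"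
    and A_lower: "\<And>x. x \<in> A \<Longrightarrow> 3 * m + 1 \<le> 2 * x"
    and A_upper: "\<And>x. x \<in> A \<Longrightarrow> 3 * x + 1 \<le> 5 * m"
    and B3: "\<And>X Y. set_mset X \<subseteq> A \<Longrightarrow> set_mset Y \<subseteq> A
              \<Longrightarrow> size X \<in> {1,2,3} \<Longrightarrow> size Y \<in> {1,2,3} \<Longrightarrow> X \<noteq> Y
              \<Longrightarrow> sum_mset X mod m \<noteq> sum_mset Y mod m"
begin

definition S :: "nat set" where
  "S = gen_sg (insert m A) (4 * m)"

definition level :: "nat \<Rightarrow> nat \<Rightarrow> nat set" where
  "level j k = (\<lambda>X. j * m + sum_mset X) ` multisets_of_size A k"

lemma m_ge_5: "5 \<le> m"
proof -
  obtain x where "x \<in> A"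
    using A_nonempty by blast
  then have "3 * m + 1 \<le> 2 * x" "3 * x + 1 \<le> 5 * m"
    using A_lower A_upper by auto
  then show ?thesis
    by linarith
qed

lemma mem_levelE:
  assumes "x \<in> level j k"
  obtains X where "set_mset X \<subseteq> A" "size X = k" "x = j * m + sum_mset X"
  using assms unfolding level_def multisets_of_size_def by blast

lemma mem_levelI:
  "set_mset X \<subseteq> A \<Longrightarrow> j * m + sum_mset X \<in> level j (size X)"
  unfolding level_def multisets_of_size_def by blast

lemma level_0: "level j 0 = {j * m}"
  by (simp add: level_def)

lemma level_0_1: "level 0 1 = A"
proof (intro equalityI subsetI)
  fix x assume "x \<in> level 0 1"
  then obtain X where X: "set_mset X \<subseteq> A" "size X = 1" "x = sum_mset X"
    by (auto elim: mem_levelE)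
  then obtain y where "X = {#y#}"
    using size_1_singleton_mset by blast
  then show "x \<in> A"
    using X by simp
next
  fix x assume "x \<in> A"
  then show "x \<in> level 0 1"
    using mem_levelI[of "{#x#}" 0] by simp
qed

lemma S_eq_levels: "S = (\<Union>j k. level j k) \<union> {4 * m..}"
  unfolding S_def gen_sg_eq_sum_mset_image[OF finite_insert[THEN iffD2, OF finite_A]]
    sum_mset_image_insert level_def multisets_of_size_def
  by blast

lemma level_subset_S: "level j k \<subseteq> S"
  using S_eq_levels by blast

lemma level_add:
  assumes "x \<in> level j k" "y \<in> level j' k'"
  shows "x + y \<in> level (j + j') (k + k')"
proof -
  obtain X Y where "set_mset X \<subseteq> A" "size X = k" "x = j * m + sum_mset X"
    and "set_mset Y \<subseteq> A" "size Y = k'" "y = j' * m + sum_mset Y"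
    using assms by (auto elim!: mem_levelE)
  then show ?thesis
    using mem_levelI[of "X + Y" "j + j'"] by (simp add: algebra_simps)
qed

lemma level_bounds:
  assumes "x \<in> level j k"
  shows "(2 * j + 3 * k) * m + k \<le> 2 * x" and "3 * x + k \<le> (3 * j + 5 * k) * m"
proof -
  obtain X where X: "set_mset X \<subseteq> A" "size X = k" "x = j * m + sum_mset X"
    using assms by (rule mem_levelE)
  have "k * (3 * m + 1) \<le> 2 * sum_mset X"
    using sum_mset_lower_bound[of X "3 * m + 1" 2] X A_lower by auto
  then show "(2 * j + 3 * k) * m + k \<le> 2 * x"
    using X(3) by (simp add: algebra_simps)
  have "3 * sum_mset X + k * 1 \<le> k * (5 * m)"
    using sum_mset_upper_bound[of X 3 1 "5 * m"] X A_upper by auto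
  then show "3 * x + k \<le> (3 * j + 5 * k) * m"
    using X(3) by (simp add: algebra_simps)
qed

lemma level_nonzero:
  assumes "x \<in> level j k" "j + k \<noteq> 0"
  shows "m \<le> x"
proof -
  have "2 * m \<le> (2 * j + 3 * k) * m"
    using assms(2) by (intro mult_right_mono) auto
  then show ?thesis
    using level_bounds(1)[OF assms(1)] by linarith
qed

lemma S_nonzero_ge:
  assumes "x \<in> S" "x \<noteq> 0"
  shows "m \<le> x"
proof (cases "4 * m \<le> x")
  case False
  then obtain j k where "x \<in> level j k"
    using assms(1) unfolding S_eq_levels by auto
  moreover have "j + k \<noteq> 0"
    using calculation assms(2) by (auto simp: level_0)
  ultimately show ?thesis
    by (rule level_nonzero)
qed simp

lemma level_bound_of_weight_lt_8:
  assumes "x \<in> level j k" "2 * j + 3 * k < 8"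
  shows "3 * x \<le> 11 * m"
proof -
  have "3 * j + 5 * k \<le> 11"
    using assms(2) by presburger
  then have "(3 * j + 5 * k) * m \<le> 11 * m"
    by (rule mult_right_mono) simp
  then show ?thesis
    using level_bounds(2)[OF assms(1)] by linarith
qed

lemma level_less_4m_iff:
  assumes "x \<in> level j k"
  shows "x < 4 * m \<longleftrightarrow> 2 * j + 3 * k < 8"
proof
  assume "x < 4 * m"
  show "2 * j + 3 * k < 8"
  proof (rule ccontr)
    assume "\<not> 2 * j + 3 * k < 8"
    then have "8 * m \<le> (2 * j + 3 * k) * m"
      by (intro mult_right_mono) auto
    then show False
      using level_bounds(1)[OF assms] \<open>x < 4 * m\<close> by linarith
  qed
next
  assume "2 * j + 3 * k < 8"
  then show "x < 4 * m"
    using level_bound_of_weight_lt_8[OF assms] m_ge_5 by linarith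
qed

lemma level_window_iff:
  assumes "x \<in> level j k"
  shows "4 * m \<le> x \<and> x < 5 * m \<longleftrightarrow> 2 * j + 3 * k \<in> {8, 9}"
proof
  assume x: "4 * m \<le> x \<and> x < 5 * m"
  have "2 * j + 3 * k < 10"
  proof (rule ccontr)
    assume "\<not> 2 * j + 3 * k < 10"
    then have "10 * m \<le> (2 * j + 3 * k) * m"
      by (intro mult_right_mono) auto
    then show False
      using level_bounds(1)[OF assms] x by linarith
  qed
  moreover have "\<not> 2 * j + 3 * k < 8"
    using level_less_4m_iff[OF assms] x by simp
  ultimately show "2 * j + 3 * k \<in> {8, 9}" by auto
next
  assume w: "2 * j + 3 * k \<in> {8, 9}"
  then have "4 * m \<le> x"
    using level_less_4m_iff[OF assms] by auto
  moreover have "x < 5 * m"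
  proof -
    have "2 * j + 3 * k = 8 \<or> 2 * j + 3 * k = 9"
      using w by simp
    then have "3 * j + 5 * k \<le> 14 \<or> k = 3 \<and> j = 0"
      by presburger
    then consider "3 * j + 5 * k \<le> 14" | "k = 3" "j = 0"
      by blast
    then show ?thesis
    proof cases
      case 1
      then have "(3 * j + 5 * k) * m \<le> 14 * m"
        by (rule mult_right_mono) simp
      then show ?thesis
        using level_bounds(2)[OF assms] m_ge_5 by linarith
    next
      case 2
      then show ?thesis
        using level_bounds(2)[OF assms] by simp
    qed
  qed
  ultimately show "4 * m \<le> x \<and> x < 5 * m" ..
qed

lemma sum_mset_not_multiple:
  assumes "set_mset X \<subseteq> A" "size X \<in> {1, 2, 3}"
  shows "\<not> m dvd sum_mset X"
proof
  assume "m dvd sum_mset X"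
  then obtain c where c: "sum_mset X = c * m"
    by (metis dvdE mult.commute)
  have "sum_mset X \<in> level 0 (size X)"
    using mem_levelI[OF assms(1), of 0] by simp
  note bounds = level_bounds[OF this, unfolded c]
  have "0 < size X"
    using assms(2) by auto
  then have "(3 * size X) * m < (2 * c) * m" "(3 * c) * m < (5 * size X) * m"
    using bounds unfolding mult_zero_right add_0_left mult.assoc by linarith+
  then have "3 * size X < 2 * c" "3 * c < 5 * size X"
    by simp_all
  then show False
    using assms(2) by auto
qed

lemma multiple_notin_level:
  assumes "k \<in> {1, 2, 3}"
  shows "j * m \<notin> level j' k"
proof
  assume "j * m \<in> level j' k"
  then obtain Y where Y: "set_mset Y \<subseteq> A" "size Y = k" "j * m = j' * m + sum_mset Y"
    by (rule mem_levelE)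
  then have "sum_mset Y = (j - j') * m"
    by (simp add: diff_mult_distrib)
  then show False
    using sum_mset_not_multiple[OF Y(1)] Y(2) assms by simp
qed

lemma level_disjoint:
  assumes "k \<le> 3" "k' \<le> 3" "(j, k) \<noteq> (j', k')"
  shows "level j k \<inter> level j' k' = {}"
proof (intro equals0I)
  fix x assume x: "x \<in> level j k \<inter> level j' k'"
  then obtain X Y where X: "set_mset X \<subseteq> A" "size X = k" "x = j * m + sum_mset X"
    and Y: "set_mset Y \<subseteq> A" "size Y = k'" "x = j' * m + sum_mset Y"
    by (auto elim!: mem_levelE)
  have zero_level_case: False
    if "k1 = 0" "x \<in> level j1 k1" "x \<in> level j2 k2" "(j1, k1) \<noteq> (j2, k2)" "k2 \<le> 3"
    for j1 k1 j2 k2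
  proof (cases "k2 = 0")
    case True
    then show False
      using that m_ge_5 by (auto simp: level_0)
  next
    case False
    then have "k2 \<in> {1, 2, 3}"
      using that(5) by auto
    then show False
      using that multiple_notin_level[of k2 j1 j2] by (auto simp: level_0)
  qed
  show False
  proof (cases "k = 0 \<or> k' = 0")
    case True
    then show False
      using zero_level_case[of k j j' k'] zero_level_case[of k' j' j k] x assms by auto
  next
    case False
    have "sum_mset X mod m = sum_mset Y mod m"
      using arg_cong[of _ _ "\<lambda>z. z mod m", OF trans[OF X(3)[symmetric] Y(3)]] by simp
    moreover have "size X \<in> {1, 2, 3}" "size Y \<in> {1, 2, 3}"
      using False assms X(2) Y(2) by auto
    ultimately have "X = Y"
      using B3[OF X(1) Y(1)] by blast
    then show False
      using X Y assms(3) m_ge_5 by auto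
  qed
qed

lemma card_level:
  assumes "k \<le> 3"
  shows "card (level j k) = (card A + k - 1) choose k"
proof (cases "k = 0")
  case True
  then show ?thesis by (simp add: level_0)
next
  case False
  have "inj_on (\<lambda>X. j * m + sum_mset X) (multisets_of_size A k)"
  proof (rule inj_onI, rule ccontr)
    fix X Y assume X: "X \<in> multisets_of_size A k" and Y: "Y \<in> multisets_of_size A k"
      and "X \<noteq> Y" and eq: "j * m + sum_mset X = j * m + sum_mset Y"
    have "k \<in> {1, 2, 3}"
      using False assms by auto
    then have "sum_mset X mod m \<noteq> sum_mset Y mod m"
      using B3[OF multisets_of_size_subset[OF X] multisets_of_size_subset[OF Y]] \<open>X \<noteq> Y\<close>
      by (simp add: multisets_of_size_size[OF X] multisets_of_size_size[OF Y])
    then show False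
      using eq by simp
  qed
  then have "card (level j k) = card (multisets_of_size A k)"
    unfolding level_def by (rule card_image)
  then show ?thesis
    using card_multisets_of_size[OF finite_A] by simp
qed

lemma card_UN_level:
  assumes "finite I" "\<And>j k. (j, k) \<in> I \<Longrightarrow> k \<le> 3"
  shows "card (\<Union>(j, k)\<in>I. level j k) = (\<Sum>(j, k)\<in>I. (card A + k - 1) choose k)"
proof -
  have "\<forall>p\<in>I. finite (case_prod level p)"
    by (auto simp: level_def finite_multisets_of_size finite_A)
  moreover have "\<forall>p\<in>I. \<forall>q\<in>I. p \<noteq> q \<longrightarrow> case_prod level p \<inter> case_prod level q = {}"
  proof (intro ballI impI)
    fix p q assume "p \<in> I" "q \<in> I" "p \<noteq> q"
    moreover obtain j k j' k' where "p = (j, k)" "q = (j', k')"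
      by (metis surj_pair)
    ultimately show "case_prod level p \<inter> case_prod level q = {}"
      using assms(2) level_disjoint by simp
  qed
  ultimately have "card (\<Union>(j, k)\<in>I. level j k) = (\<Sum>p\<in>I. card (case_prod level p))"
    by (rule card_UN_disjoint[OF assms(1)])
  also have "\<dots> = (\<Sum>(j, k)\<in>I. (card A + k - 1) choose k)"
    using assms(2) by (intro sum.cong) (auto simp: card_level)
  finally show ?thesis .
qed

lemma level_subset_D:
  assumes "2 \<le> j + k"
  shows "level j k \<subseteq> D_ns S"
proof
  have summand: "y \<in> Sstar S" if "y \<in> level j' k'" "j' + k' \<noteq> 0" for y j' k'
    using level_subset_S level_nonzero[OF that] that(1) m_ge_5 unfolding Sstar_def by auto
  fix x assume "x \<in> level j k"
  then obtain X where X: "set_mset X \<subseteq> A" "size X = k" "x = j * m + sum_mset X"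
    by (rule mem_levelE)
  obtain y z where "y \<in> Sstar S" "z \<in> Sstar S" "x = y + z"
  proof (cases X)
    case empty
    with X assms have "x = m + (j - 1) * m" "2 \<le> j"
      by (cases j; simp)+
    moreover have "m \<in> Sstar S" "(j - 1) * m \<in> Sstar S"
      using summand[of m 1 0] summand[of "(j - 1) * m" "j - 1" 0] \<open>2 \<le> j\<close>
      by (simp_all add: level_0)
    ultimately show ?thesis
      using that by blast
  next
    case (add y X')
    with X have y: "y \<in> level 0 1" and rest: "j * m + sum_mset X' \<in> level j (k - 1)"
      and "x = y + (j * m + sum_mset X')"
      using level_0_1 mem_levelI[of X' j] by auto
    moreover have "j + (k - 1) \<noteq> 0"
      using assms by arith
    ultimately show ?thesis
      using that summand[OF y] summand[OF rest] by simp
  qed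
  then show "x \<in> D_ns S"
    unfolding D_ns_def by blast
qed

lemma conductor_S: "conductor_ns S = 4 * m"
  unfolding conductor_ns_def
proof (rule Least_equality)
  show "\<forall>z\<ge>4 * m. z \<in> S"
    using S_eq_levels by blast
  fix c assume c: "\<forall>z\<ge>c. z \<in> S"
  show "4 * m \<le> c"
  proof (rule ccontr)
    assume "\<not> 4 * m \<le> c"
    then have "4 * m - 1 \<in> S" using c by auto
    then obtain j k where jk: "4 * m - 1 \<in> level j k"
      using S_eq_levels m_ge_5 by auto
    then have "2 * j + 3 * k < 8"
      using level_less_4m_iff[OF jk] m_ge_5 by simp
    then have "3 * (4 * m - 1) \<le> 11 * m"
      using level_bound_of_weight_lt_8[OF jk] by blast
    then show False
      using m_ge_5 by linarith
  qed
qed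

lemma multiplicity_S: "multiplicity_ns S = m"
  unfolding multiplicity_ns_def
proof (rule Least_equality)
  have "m \<in> level 1 0"
    by (simp add: level_0)
  then show "m \<in> S \<and> m \<noteq> 0"
    using level_subset_S m_ge_5 by auto
next
  fix y assume "y \<in> S \<and> y \<noteq> 0"
  then show "m \<le> y"
    using S_nonzero_ge by blast
qed

lemma L_S: "L_ns S = (\<Union>(j, k)\<in>{(j, k). 2 * j + 3 * k < 8}. level j k)"
proof (intro equalityI subsetI)
  fix x assume "x \<in> L_ns S"
  then have "x \<in> S" "x < 4 * m"
    unfolding L_ns_def conductor_S by auto
  then obtain j k where "x \<in> level j k"
    unfolding S_eq_levels by auto
  with \<open>x < 4 * m\<close> show "x \<in> (\<Union>(j, k)\<in>{(j, k). 2 * j + 3 * k < 8}. level j k)"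
    using level_less_4m_iff by blast
next
  fix x assume "x \<in> (\<Union>(j, k)\<in>{(j, k). 2 * j + 3 * k < 8}. level j k)"
  then obtain j k where "x \<in> level j k" "2 * j + 3 * k < 8"
    by blast
  then show "x \<in> L_ns S"
    unfolding L_ns_def conductor_S using level_subset_S level_less_4m_iff by auto
qed

lemma level_subset_L: "2 * j + 3 * k < 8 \<Longrightarrow> level j k \<subseteq> L_ns S"
  unfolding L_S by blast

lemma D_ge_2m:
  assumes "z \<in> D_ns S"
  shows "2 * m \<le> z"
proof -
  obtain s t where "z = s + t" "s \<in> S" "t \<in> S" "s \<noteq> 0" "t \<noteq> 0"
    using assms unfolding D_ns_def Sstar_def by blast
  moreover from this have "m \<le> s" "m \<le> t"
    using S_nonzero_ge by blast+
  ultimately show ?thesis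
    by linarith
qed

lemma Dq_S: "Dq_ns S = (\<Union>(j, k)\<in>{(j, k). 2 * j + 3 * k \<in> {8, 9}}. level j k)"
proof (intro equalityI subsetI)
  fix z assume "z \<in> Dq_ns S"
  then have z: "z \<in> D_ns S" "4 * m \<le> z" "z < 5 * m"
    unfolding Dq_ns_def conductor_S multiplicity_S using m_ge_5 by auto
  then obtain s t where st: "z = s + t" "s \<in> S" "t \<in> S" "s \<noteq> 0" "t \<noteq> 0"
    unfolding D_ns_def Sstar_def by blast
  then have "s < 4 * m" "t < 4 * m"
    using S_nonzero_ge z(3) by fastforce+
  then obtain j k j' k' where "s \<in> level j k" "t \<in> level j' k'"
    using st S_eq_levels by auto
  then have "z \<in> level (j + j') (k + k')"
    using st(1) level_add by blast
  with z show "z \<in> (\<Union>(j, k)\<in>{(j, k). 2 * j + 3 * k \<in> {8, 9}}. level j k)"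
    using level_window_iff by blast
next
  fix z assume "z \<in> (\<Union>(j, k)\<in>{(j, k). 2 * j + 3 * k \<in> {8, 9}}. level j k)"
  then obtain j k where jk: "z \<in> level j k" "2 * j + 3 * k \<in> {8, 9}" by blast
  then have "2 \<le> j + k" by auto
  then show "z \<in> Dq_ns S"
    using jk level_subset_D level_window_iff[OF jk(1)]
    unfolding Dq_ns_def conductor_S multiplicity_S by auto
qed

lemma P_inter_L_S: "P_ns S \<inter> L_ns S = insert m A"
proof (intro equalityI subsetI)
  fix y assume "y \<in> P_ns S \<inter> L_ns S"
  then obtain j k where y: "y \<in> level j k" "2 * j + 3 * k < 8" "y \<noteq> 0" "y \<notin> D_ns S"
    unfolding P_ns_def Sstar_def L_S by blast
  then have "j + k < 2"
    using level_subset_D by (meson in_mono not_less)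
  moreover have "j + k \<noteq> 0"
    using y by (auto simp: level_0)
  ultimately consider "j = 1" "k = 0" | "j = 0" "k = 1"
    by linarith
  then show "y \<in> insert m A"
    using y(1) level_0_1 by cases (simp_all add: level_0)
next
  fix y assume y: "y \<in> insert m A"
  then have "y \<in> level 1 0 \<union> level 0 1"
    unfolding level_0_1 level_0 by simp
  then have "y \<in> L_ns S" "y \<in> S"
    using level_subset_L[of 1 0] level_subset_L[of 0 1] level_subset_S[of 1 0] level_subset_S[of 0 1]
    by auto
  moreover have "y < 2 * m" "y \<noteq> 0"
    using y A_upper A_lower m_ge_5 by fastforce+
  ultimately show "y \<in> P_ns S \<inter> L_ns S"
    unfolding P_ns_def Sstar_def by (auto dest: D_ge_2m)
qed

lemma card_L_S: "card (L_ns S) = 4 + 3 * card A + (Suc (card A) choose 2)"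
proof -
  have weights: "{(j, k). 2 * j + 3 * k < 8}
      = {(0, 0), (1, 0), (2, 0), (3, 0), (0, 1), (1, 1), (2, 1), (0, 2) :: nat \<times> nat}"
    by (auto; presburger)
  have "card (L_ns S) = (\<Sum>(j, k)\<in>{(0, 0), (1, 0), (2, 0), (3, 0), (0, 1), (1, 1), (2, 1), (0, 2) :: nat \<times> nat}.
      (card A + k - 1) choose k)"
    unfolding L_S weights by (rule card_UN_level) auto
  then show ?thesis
    by simp
qed

lemma card_Dq_S: "card (Dq_ns S) = 1 + card A + (Suc (card A) choose 2) + (Suc (Suc (card A)) choose 3)"
proof -
  have weights: "{(j, k). 2 * j + 3 * k \<in> {8, 9}} = {(4, 0), (3, 1), (1, 2), (0, 3) :: nat \<times> nat}"
    by (auto; presburger)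
  have "card (Dq_ns S) = (\<Sum>(j, k)\<in>{(4, 0), (3, 1), (1, 2), (0, 3) :: nat \<times> nat}. (card A + k - 1) choose k)"
    unfolding Dq_S weights by (rule card_UN_level) auto
  then show ?thesis
    by simp
qed

lemma m_notin_A: "m \<notin> A"
  using A_lower[of m] by auto

lemma card_P_inter_L_S: "card (P_ns S \<inter> L_ns S) = Suc (card A)"
  using m_notin_A by (simp add: P_inter_L_S finite_A)

lemma W0_S: "W0 S = - int (Suc (card A) choose 3)"
proof -
  have "q_ns S = 4"
    unfolding q_ns_def conductor_S multiplicity_S using m_ge_5 by simp
  moreover have "rho_ns S = 0"
    unfolding rho_ns_def \<open>q_ns S = 4\<close> conductor_S multiplicity_S by simp
  moreover have "Suc (card A) * card (L_ns S) + (Suc (card A) choose 3) = 4 * card (Dq_ns S)"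
    unfolding card_L_S card_Dq_S by (rule binomial_count_identity)
  then have "int (Suc (card A)) * int (card (L_ns S)) + int (Suc (card A) choose 3)
      = 4 * int (card (Dq_ns S))"
    unfolding of_nat_mult[symmetric] of_nat_add[symmetric] by simp
  ultimately show ?thesis
    unfolding W0_def card_P_inter_L_S by simp
qed

end

theorem proposition3p3:
  fixes m a b n :: nat and A :: "nat set"
  assumes "m > 0" "a > 0" "b > 0" "n \<ge> 3"
    and "real (3 * m + 1) / 2 \<le> real a" "a < b" "real b \<le> (5 * real m - 1) / 3"
    and "A \<subseteq> {1..}" "finite A" "card A = n - 1" "Min A = a" "Max A = b"
    and B3: "\<And>X Y. set_mset X \<subseteq> A \<Longrightarrow> set_mset Y \<subseteq> A
              \<Longrightarrow> size X \<in> {1,2,3} \<Longrightarrow> size Y \<in> {1,2,3} \<Longrightarrow> X \<noteq> Y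
              \<Longrightarrow> sum_mset X mod m \<noteq> sum_mset Y mod m"
  shows "conductor_ns (gen_sg ({m} \<union> A) (4 * m)) = 4 * m
       \<and> card (P_ns (gen_sg ({m} \<union> A) (4 * m)) \<inter> L_ns (gen_sg ({m} \<union> A) (4 * m))) = n
       \<and> W0 (gen_sg ({m} \<union> A) (4 * m)) = - int (n choose 3)"
proof -
  have "A \<noteq> {}"
    using assms(4,10) by auto
  moreover have "3 * m + 1 \<le> 2 * a" "3 * b + 1 \<le> 5 * m"
    using assms(5,7) by (simp_all add: field_simps flip: of_nat_le_iff)
  moreover have "a \<le> x \<and> x \<le> b" if "x \<in> A" for x
    using that assms(9,11,12) \<open>A \<noteq> {}\<close> by auto
  ultimately interpret B3_generators m A
    using assms(9) B3 by unfold_locales fastforce+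
  have "n = Suc (card A)"
    using assms(4,10) by simp
  then show ?thesis
    using conductor_S card_P_inter_L_S W0_S unfolding S_def by simp
qed

end
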